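(* Let $\pi$ be a projective plane of order $q$ and let $n$ be an integer with $2\le q-n\le q$. Let $\phi$ be an embedding of the complete bipartite graph $G=K_{q-n,q}$ into $\pi$, with vertex classes $U,V$, $|U|=q-n$, $|V|=q$. If $q>n^2$, then the points $\phi(U\cup V)$ lie on the union of two lines of $\pi$.
   Context: A finite projective plane of order $q$ has $q^2+q+1$ points and lines, $q+1$ points on each line and $q+1$ lines through each point; any two distinct points lie on a unique line and any two lines meet in a unique point. An embedding of a simple graph $G=(V,E)$ into $\pi$ is an injective map $\phi$ from $V$ to the points of $\pi$ such that the induced map sending an edge $ab$ to the line through $\phi(a),\phi(b)$ is injective on $E$. *)

theory Defs
  imports Main
begin

definition projective_plane ::
  "'p set \<Rightarrow> 'l set \<Rightarrow> ('p \<Rightarrow> 'l \<Rightarrow> bool) \<Rightarrow> nat \<Rightarrow> bool" where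
  "projective_plane Pts Lns I q \<longleftrightarrow>
     finite Pts \<and> finite Lns \<and>
     card Pts = q^2 + q + 1 \<and> card Lns = q^2 + q + 1 \<and>
     (\<forall>l\<in>Lns. card {p\<in>Pts. I p l} = q + 1) \<and>
     (\<forall>p\<in>Pts. card {l\<in>Lns. I p l} = q + 1) \<and>
     (\<forall>p\<in>Pts. \<forall>p'\<in>Pts. p \<noteq> p' \<longrightarrow> (\<exists>!l. l \<in> Lns \<and> I p l \<and> I p' l)) \<and>
     (\<forall>l\<in>Lns. \<forall>l'\<in>Lns. l \<noteq> l' \<longrightarrow> (\<exists>!p. p \<in> Pts \<and> I p l \<and> I p l'))"

definition simple_graph :: "'v set \<Rightarrow> 'v set set \<Rightarrow> bool" where
  "simple_graph V E \<longleftrightarrow> (\<forall>e\<in>E. e \<subseteq> V \<and> card e = 2)"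

text \<open>Embedding of a simple graph (V,E) into the plane: injective map on
  vertices into points, such that the induced map sending edge {a,b}
  to the line through phi a, phi b is injective on E.\<close>
definition graph_embedding ::
  "'p set \<Rightarrow> 'l set \<Rightarrow> ('p \<Rightarrow> 'l \<Rightarrow> bool) \<Rightarrow> 'v set \<Rightarrow> 'v set set \<Rightarrow> ('v \<Rightarrow> 'p) \<Rightarrow> bool" where
  "graph_embedding Pts Lns I V E phi \<longleftrightarrow>
     phi ` V \<subseteq> Pts \<and> inj_on phi V \<and>
     inj_on (\<lambda>e. THE l. l \<in> Lns \<and> (\<forall>x\<in>e. I (phi x) l)) E"

definition complete_bipartite_edges :: "'v set \<Rightarrow> 'v set \<Rightarrow> 'v set set" where
  "complete_bipartite_edges U W = {{u, w} | u w. u \<in> U \<and> w \<in> W}"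

end

theory Submission imports Defs begin

text \<open>Let A and B be the images of the two vertex classes. Since the q lines joining a point
  a of A to B are distinct, together with the line L through two points of A they exhaust the
  pencil at a; hence all of A lies on L and no point of B does. If B is not collinear, project
  a secant M of B from a point of B off M onto L: the image avoids A and the point M \<inter> L, so
  M carries at most d - 1 points of B, where d = q + 1 - |A| = n + 1 counts the points of L
  outside A. Covering B by the lines through a fixed point of B and the d points of L outside A
  then gives q - 1 \<le> d (d - 2) = n^2 - 1.\<close>

locale proj_plane =
  fixes Pts :: "'p set" and Lns :: "'l set" and I :: "'p \<Rightarrow> 'l \<Rightarrow> bool" and q :: nat
  assumes projective_plane: "projective_plane Pts Lns I q"
begin

lemma finite_Pts: "finite Pts" and finite_Lns: "finite Lns"
  using projective_plane by (auto simp: projective_plane_def)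

lemma card_points_on_line: "l \<in> Lns \<Longrightarrow> card {p\<in>Pts. I p l} = q + 1"
  using projective_plane by (auto simp: projective_plane_def)

lemma card_lines_through: "p \<in> Pts \<Longrightarrow> card {l\<in>Lns. I p l} = q + 1"
  using projective_plane by (auto simp: projective_plane_def)

lemma unique_line: "\<lbrakk>p \<in> Pts; p' \<in> Pts; p \<noteq> p'\<rbrakk> \<Longrightarrow> \<exists>!l. l \<in> Lns \<and> I p l \<and> I p' l"
  using projective_plane by (simp add: projective_plane_def)

lemma unique_point: "\<lbrakk>l \<in> Lns; l' \<in> Lns; l \<noteq> l'\<rbrakk> \<Longrightarrow> \<exists>!p. p \<in> Pts \<and> I p l \<and> I p l'"
  using projective_plane by (simp add: projective_plane_def)

lemma line_eqI:
  assumes "p \<in> Pts" "p' \<in> Pts" "p \<noteq> p'" "l \<in> Lns" "l' \<in> Lns"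
    and "I p l" "I p' l" "I p l'" "I p' l'"
  shows "l = l'"
  using unique_line[OF assms(1-3)] assms(4-) by blast

definition join :: "'p \<Rightarrow> 'p \<Rightarrow> 'l" where
  "join p p' = (SOME l. l \<in> Lns \<and> I p l \<and> I p' l)"

definition meet :: "'l \<Rightarrow> 'l \<Rightarrow> 'p" where
  "meet l l' = (SOME p. p \<in> Pts \<and> I p l \<and> I p l')"

lemma join_incident:
  assumes "p \<in> Pts" "p' \<in> Pts" "p \<noteq> p'"
  shows "join p p' \<in> Lns" "I p (join p p')" "I p' (join p p')"
proof -
  have "\<exists>l. l \<in> Lns \<and> I p l \<and> I p' l" using unique_line[OF assms] by blast
  from someI_ex[OF this] show "join p p' \<in> Lns" "I p (join p p')" "I p' (join p p')"
    unfolding join_def by auto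
qed

lemma join_eq:
  assumes "p \<in> Pts" "p' \<in> Pts" "p \<noteq> p'" "l \<in> Lns" "I p l" "I p' l"
  shows "join p p' = l"
  using line_eqI join_incident assms by metis

lemma meet_incident:
  assumes "l \<in> Lns" "l' \<in> Lns" "l \<noteq> l'"
  shows "meet l l' \<in> Pts" "I (meet l l') l" "I (meet l l') l'"
proof -
  have "\<exists>p. p \<in> Pts \<and> I p l \<and> I p l'" using unique_point[OF assms] by blast
  from someI_ex[OF this] show "meet l l' \<in> Pts" "I (meet l l') l" "I (meet l l') l'"
    unfolding meet_def by auto
qed

lemma perspectivity_inj:
  assumes c: "c \<in> Pts" "\<not> I c L" "\<not> I c M" and lines: "L \<in> Lns" "M \<in> Lns"
  shows "inj_on (\<lambda>x. meet (join c x) L) {x\<in>Pts. I x M}"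
proof (rule inj_onI, rule ccontr)
  fix x y assume x: "x \<in> {x\<in>Pts. I x M}" and y: "y \<in> {x\<in>Pts. I x M}" and "x \<noteq> y"
    and eq: "meet (join c x) L = meet (join c y) L"
  have pts: "x \<in> Pts" "y \<in> Pts" "c \<noteq> x" "c \<noteq> y" using x y c by auto
  note cx = join_incident[OF c(1) pts(1,3)] and cy = join_incident[OF c(1) pts(2,4)]
  have "join c x \<noteq> L" "join c y \<noteq> L" using cx cy c by auto
  note Px = meet_incident[OF cx(1) lines(1) \<open>join c x \<noteq> L\<close>]
   and Py = meet_incident[OF cy(1) lines(1) \<open>join c y \<noteq> L\<close>]
  have "c \<noteq> meet (join c x) L" using Px c x by auto
  then have "join c x = join c y"
    using line_eqI[OF c(1)] Px Py cx cy x y eq by auto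
  then have "join c x = M"
    using line_eqI[of x y] \<open>x \<noteq> y\<close> cx cy x y lines by auto
  then show False using cx c x by auto
qed

lemma perspectivity_not_on:
  assumes c: "c \<in> Pts" "\<not> I c L" "\<not> I c M" and lines: "L \<in> Lns" "M \<in> Lns"
    and x: "x \<in> Pts" "I x M" "\<not> I x L"
  shows "\<not> I (meet (join c x) L) M"
proof
  assume on_M: "I (meet (join c x) L) M"
  have "c \<noteq> x" using c x by auto
  note cx = join_incident[OF c(1) x(1) this]
  have "join c x \<noteq> L" using cx c by auto
  note P = meet_incident[OF cx(1) lines(1) this]
  have "x \<noteq> meet (join c x) L" using P x by auto
  then have "join c x = M" using line_eqI[OF x(1) P(1)] cx P on_M x lines by auto
  then show False using cx c by auto
qed

end

text \<open>The hypothesis cross_lines says that the lines joining a point of A to a point of B are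
  pairwise distinct, i.e. the identity embeds the complete bipartite graph on A and B.\<close>

locale complete_bipartite_in_plane = proj_plane Pts Lns I q
    for Pts :: "'p set" and Lns :: "'l set" and I and q +
  fixes A B :: "'p set"
  assumes A_points: "A \<subseteq> Pts" and B_points: "B \<subseteq> Pts" and disjoint: "A \<inter> B = {}"
    and cross_lines: "\<lbrakk>l \<in> Lns; a \<in> A; a' \<in> A; b \<in> B; b' \<in> B;
      I a l; I a' l; I b l; I b' l\<rbrakk> \<Longrightarrow> a = a' \<and> b = b'"
begin

lemma A_point: "a \<in> A \<Longrightarrow> a \<in> Pts" and B_point: "b \<in> B \<Longrightarrow> b \<in> Pts"
  using A_points B_points by auto

lemma A_secant_avoids_B:
  "\<lbrakk>a \<in> A; a' \<in> A; a \<noteq> a'; l \<in> Lns; I a l; I a' l; b \<in> B\<rbrakk> \<Longrightarrow> \<not> I b l"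
  using cross_lines by blast

lemma B_secant_avoids_A:
  "\<lbrakk>b \<in> B; b' \<in> B; b \<noteq> b'; l \<in> Lns; I b l; I b' l; a \<in> A\<rbrakk> \<Longrightarrow> \<not> I a l"
  using cross_lines by blast

lemma A_collinear:
  assumes card_B: "card B = q" and a01: "a0 \<in> A" "a1 \<in> A" "a0 \<noteq> a1" and a: "a \<in> A"
  shows "I a (join a0 a1)"
proof -
  define L where "L = join a0 a1"
  have pts: "a0 \<in> Pts" "a1 \<in> Pts" "a \<in> Pts" using A_points a01 a by auto
  note L = join_incident[OF pts(1,2) a01(3), folded L_def]
  have ab: "join a0 b \<in> Lns" "I a0 (join a0 b)" "I b (join a0 b)" if "b \<in> B" for b
    using join_incident[OF pts(1), of b] disjoint a01 that B_points by auto
  define pencil where "pencil = {l\<in>Lns. I a0 l}"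
  define joins where "joins = (\<lambda>b. join a0 b) ` B"
  have "inj_on (\<lambda>b. join a0 b) B"
    by (rule inj_onI) (use cross_lines[OF _ a01(1,1)] ab in metis)
  then have "card joins = q" using card_B card_image joins_def by blast
  moreover have "L \<notin> joins"
    using A_secant_avoids_B[OF a01 L(1-3)] ab by (auto simp: joins_def)
  moreover have sub: "insert L joins \<subseteq> pencil"
    using L ab by (auto simp: pencil_def joins_def)
  moreover have "finite pencil" using finite_Lns by (simp add: pencil_def)
  ultimately have pencil: "insert L joins = pencil"
    using card_lines_through[OF pts(1)] finite_subset[OF sub]
    by (intro card_subset_eq) (auto simp: pencil_def)
  show ?thesis
  proof (cases "a = a0")
    case False
    note aa = join_incident[OF pts(1,3) False[symmetric]]
    have "join a0 a \<notin> joins"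
    proof
      assume "join a0 a \<in> joins"
      then obtain b where "b \<in> B" "join a0 a = join a0 b" by (auto simp: joins_def)
      then show False using cross_lines[OF aa(1) a01(1) a] ab aa False by metis
    qed
    then have "join a0 a = L" using pencil aa by (auto simp: pencil_def)
    then show ?thesis using aa L_def by auto
  qed (use L L_def in auto)
qed

definition free_points :: "'l \<Rightarrow> 'p set" where
  "free_points L = {p\<in>Pts. I p L} - A"

context
  fixes L assumes L: "L \<in> Lns" and B_off_L: "\<And>b. b \<in> B \<Longrightarrow> \<not> I b L"
begin

lemma finite_free_points: "finite (free_points L)"
  using finite_Pts by (simp add: free_points_def)

lemma meet_B_secant_free:
  assumes "b \<in> B" "b' \<in> B" "b \<noteq> b'"
  shows "join b b' \<noteq> L" "meet (join b b') L \<in> free_points L"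
proof -
  note bb = join_incident[OF B_point[OF assms(1)] B_point[OF assms(2)] assms(3)]
  show ne: "join b b' \<noteq> L" using bb B_off_L assms by blast
  note P = meet_incident[OF bb(1) L ne]
  have "meet (join b b') L \<notin> A" using B_secant_avoids_A[OF assms bb] P by blast
  then show "meet (join b b') L \<in> free_points L" unfolding free_points_def using P by blast
qed

lemma card_B_on_secant_le:
  assumes b: "b \<in> B" "b' \<in> B" "b \<noteq> b'" and c: "c \<in> B" "\<not> I c (join b b')"
  shows "card {x\<in>B. I x (join b b')} \<le> card (free_points L) - 1"
proof -
  define M where "M = join b b'"
  have M: "M \<in> Lns" "M \<noteq> L"
    using join_incident(1)[OF B_point[OF b(1)] B_point[OF b(2)] b(3)] meet_B_secant_free(1)[OF b]
    by (simp_all add: M_def)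
  have c_pt: "c \<in> Pts" "\<not> I c L" "\<not> I c M" using B_point B_off_L c by (auto simp: M_def)
  have "inj_on (\<lambda>x. meet (join c x) L) {x\<in>B. I x M}"
    by (rule inj_on_subset[OF perspectivity_inj[OF c_pt L M(1)]]) (use B_point in auto)
  moreover have "(\<lambda>x. meet (join c x) L) ` {x\<in>B. I x M} \<subseteq> free_points L - {meet M L}"
  proof clarify
    fix x assume x: "x \<in> B" "I x M"
    then have "c \<noteq> x" using c_pt by auto
    have "meet (join c x) L \<in> free_points L" using meet_B_secant_free(2)[OF c(1) x(1) \<open>c \<noteq> x\<close>] .
    moreover have "\<not> I (meet (join c x) L) M"
      by (rule perspectivity_not_on[OF c_pt L M(1) B_point[OF x(1)] x(2) B_off_L[OF x(1)]])
    moreover have "I (meet M L) M" using meet_incident(2)[OF M(1) L M(2)] .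
    ultimately show "meet (join c x) L \<in> free_points L - {meet M L}" by auto
  qed
  ultimately have "card {x\<in>B. I x M} \<le> card (free_points L - {meet M L})"
    using card_inj_on_le finite_free_points by blast
  also have "\<dots> = card (free_points L) - 1"
    using meet_B_secant_free(2)[OF b] finite_free_points by (simp add: M_def)
  finally show ?thesis unfolding M_def .
qed

lemma B_in_fiber:
  assumes b: "b \<in> B" and x: "x \<in> B" "x \<noteq> b"
  shows "meet (join b x) L \<in> free_points L" "I x (join b (meet (join b x) L))"
proof -
  define P where "P = meet (join b x) L"
  have ne: "b \<noteq> x" using x by simp
  note bx = join_incident[OF B_point[OF b] B_point[OF x(1)] ne]
  show P_free: "P \<in> free_points L" using meet_B_secant_free(2)[OF b x(1) ne] by (simp add: P_def)
  have P: "P \<in> Pts" "I P (join b x)"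
    using meet_incident[OF bx(1) L meet_B_secant_free(1)[OF b x(1) ne]] by (simp_all add: P_def)
  have "b \<noteq> P" using P_free B_off_L[OF b] by (auto simp: free_points_def)
  then have "join b P = join b x" using join_eq[OF B_point[OF b] P(1) _ bx(1,2) P(2)] by simp
  then show "I x (join b P)" using bx(3) by simp
qed

lemma card_B_le:
  assumes not_collinear: "\<not> (\<exists>M\<in>Lns. \<forall>b\<in>B. I b M)" and b: "b \<in> B"
  shows "card B - 1 \<le> card (free_points L) * (card (free_points L) - 2)"
proof -
  define fiber where "fiber P = {x\<in>B - {b}. I x (join b P)}" for P
  have card_fiber: "card (fiber P) \<le> card (free_points L) - 2" if P: "P \<in> free_points L" for P
  proof (cases "fiber P = {}")
    case False
    then obtain x where x: "x \<in> B" "x \<noteq> b" "I x (join b P)" by (auto simp: fiber_def)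
    have pts: "P \<in> Pts" "b \<noteq> P" "b \<noteq> x"
      using P B_off_L[OF b] x(2) by (auto simp: free_points_def)
    note bP = join_incident[OF B_point[OF b] pts(1,2)]
    have same: "join b x = join b P" using join_eq[OF B_point[OF b] B_point[OF x(1)] pts(3) bP(1,2) x(3)] .
    obtain c where c: "c \<in> B" "\<not> I c (join b x)" using not_collinear bP(1) same by auto
    have "fiber P = {y\<in>B. I y (join b x)} - {b}" using same by (auto simp: fiber_def)
    moreover have "b \<in> {y\<in>B. I y (join b x)}" using b bP(2) same by simp
    ultimately show ?thesis
      using card_B_on_secant_le[OF b x(1) pts(3) c] finite_subset[OF _ finite_Pts] B_points
      by (simp add: card_Diff_singleton)
  qed simp
  have "B - {b} \<subseteq> (\<Union>P\<in>free_points L. fiber P)"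
    using B_in_fiber[OF b] by (force simp: fiber_def)
  then have "card B - 1 \<le> card (\<Union>P\<in>free_points L. fiber P)"
    using b finite_free_points finite_subset[OF B_points finite_Pts] card_mono[of _ "B - {b}"]
    by (simp add: fiber_def)
  also have "\<dots> \<le> (\<Sum>P\<in>free_points L. card (fiber P))" by (rule card_UN_le[OF finite_free_points])
  also have "\<dots> \<le> card (free_points L) * (card (free_points L) - 2)"
    using sum_bounded_above[of "free_points L" "\<lambda>P. card (fiber P)"] card_fiber by simp
  finally show ?thesis .
qed

end

theorem on_two_lines:
  assumes card_B: "card B = q" and card_A: "2 \<le> card A"
    and small: "(q + 1 - card A) * (q - 1 - card A) < q - 1"
  shows "\<exists>L\<in>Lns. \<exists>M\<in>Lns. (\<forall>a\<in>A. I a L) \<and> (\<forall>b\<in>B. I b M)"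
proof -
  have "finite A" using finite_subset[OF A_points finite_Pts] .
  then obtain a0 a1 where a01: "a0 \<in> A" "a1 \<in> A" "a0 \<noteq> a1"
    using card_A card_le_Suc0_iff_eq[OF \<open>finite A\<close>] by force
  define L where "L = join a0 a1"
  have L: "L \<in> Lns" using join_incident(1)[OF A_point A_point a01(3)] a01 L_def by blast
  have A_on_L: "\<forall>a\<in>A. I a L" using A_collinear[OF card_B a01] L_def by blast
  have B_off_L: "b \<in> B \<Longrightarrow> \<not> I b L" for b
    using A_secant_avoids_B[OF a01 L] A_on_L a01 by blast
  have A_sub: "A \<subseteq> {p\<in>Pts. I p L}" using A_on_L A_point by blast
  have card_free: "card (free_points L) = q + 1 - card A"
    unfolding free_points_def card_Diff_subset[OF \<open>finite A\<close> A_sub]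
    using card_points_on_line[OF L] by simp
  show ?thesis
  proof (cases "\<exists>M\<in>Lns. \<forall>b\<in>B. I b M")
    case False
    then have "B \<noteq> {}" using L by blast
    then obtain b where "b \<in> B" by blast
    from card_B_le[OF L B_off_L False this] have "q - 1 \<le> (q + 1 - card A) * (q - 1 - card A)"
      unfolding card_B card_free by (simp add: diff_diff_add)
    with small show ?thesis by linarith
  qed (use L A_on_L in blast)
qed

end

lemma (in proj_plane) complete_bipartite_embedding:
  assumes emb: "graph_embedding Pts Lns I (U \<union> W) (complete_bipartite_edges U W) phi"
    and disj: "U \<inter> W = {}"
  shows "complete_bipartite_in_plane Pts Lns I q (phi ` U) (phi ` W)"
proof -
  have pts: "phi ` (U \<union> W) \<subseteq> Pts" and inj: "inj_on phi (U \<union> W)"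
    using emb by (auto simp: graph_embedding_def)
  define edge_line where "edge_line = (\<lambda>e. THE l. l \<in> Lns \<and> (\<forall>x\<in>e. I (phi x) l))"
  have edge_line: "edge_line {u, w} = l"
    if "u \<in> U" "w \<in> W" "l \<in> Lns" "I (phi u) l" "I (phi w) l" for u w l
  proof -
    have "phi u \<noteq> phi w" using inj disj that by (metis UnI1 UnI2 disjoint_iff inj_on_contraD)
    then show ?thesis unfolding edge_line_def
      using line_eqI[of "phi u" "phi w"] pts that by (intro the_equality) auto
  qed
  have inj_edge_line: "inj_on edge_line (complete_bipartite_edges U W)"
    using emb by (simp add: graph_embedding_def edge_line_def)
  have cross: "u = u' \<and> w = w'"
    if "u \<in> U" "u' \<in> U" "w \<in> W" "w' \<in> W" "l \<in> Lns"
      "I (phi u) l" "I (phi u') l" "I (phi w) l" "I (phi w') l" for u u' w w' l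
  proof -
    have "{u, w} = {u', w'}"
    proof (rule inj_onD[OF inj_edge_line])
      show "edge_line {u, w} = edge_line {u', w'}" using edge_line that by simp
    qed (use that in \<open>auto simp: complete_bipartite_edges_def\<close>)
    then show ?thesis using that disj by (auto simp: doubleton_eq_iff)
  qed
  show ?thesis
  proof unfold_locales
    fix l a a' b b'
    assume "l \<in> Lns" "a \<in> phi ` U" "a' \<in> phi ` U" "b \<in> phi ` W" "b' \<in> phi ` W"
      and "I a l" "I a' l" "I b l" "I b' l"
    then show "a = a' \<and> b = b'" using cross by blast
  next
    show "phi ` U \<inter> phi ` W = {}"
      using inj disj by (auto simp: inj_on_def)
  qed (use pts in auto)
qed

theorem theorem3p9:
  fixes Pts :: "'p set" and Lns :: "'l set" and I :: "'p \<Rightarrow> 'l \<Rightarrow> bool"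
    and q n :: nat and U W :: "'v set" and phi :: "'v \<Rightarrow> 'p"
  assumes plane: "projective_plane Pts Lns I q"
    and n_bounds: "2 \<le> int q - int n" "int q - int n \<le> int q"
    and UW: "finite U" "finite W" "U \<inter> W = {}"
    and cardU: "card U = q - n" and cardW: "card W = q"
    and emb: "graph_embedding Pts Lns I (U \<union> W) (complete_bipartite_edges U W) phi"
    and big: "q > n^2"
  shows "\<exists>l1\<in>Lns. \<exists>l2\<in>Lns. \<forall>x\<in>U \<union> W. I (phi x) l1 \<or> I (phi x) l2"
proof -
  interpret proj_plane Pts Lns I q using plane by unfold_locales
  interpret complete_bipartite_in_plane Pts Lns I q "phi ` U" "phi ` W"
    using complete_bipartite_embedding[OF emb UW(3)] .
  have inj: "inj_on phi (U \<union> W)" using emb by (simp add: graph_embedding_def)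
  have card_A: "card (phi ` U) = q - n" and card_B: "card (phi ` W) = q"
    using card_image inj_on_subset[OF inj] cardU cardW by (metis Un_upper1 Un_upper2)+
  have nq: "n + 2 \<le> q" using n_bounds(1) by linarith
  have "(n + 1) * (n - 1) < q - 1"
  proof (cases n)
    case (Suc m)
    then show ?thesis using big by (simp add: power2_eq_square algebra_simps)
  qed (use nq in simp)
  moreover have "q + 1 - card (phi ` U) = n + 1" "q - 1 - card (phi ` U) = n - 1"
    using card_A nq by auto
  ultimately obtain L M where "L \<in> Lns" "M \<in> Lns" "\<forall>u\<in>U. I (phi u) L" "\<forall>w\<in>W. I (phi w) M"
    using on_two_lines[OF card_B] card_A nq by fastforce
  then show ?thesis by blast
qed

end
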